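(* Let $q\in(0,1)$, $\alpha>\gamma>0$, $r=\gamma/\alpha$, and $t\ge0$. With $W_t$ and $\iota$ as in the context, the random element $\iota(W_t)$ of $\mathcal{H}_{q,r}(B_n)$ has the same distribution as $W_t$.
   Context: $B_n$ is the hyperoctahedral group of signed permutations $\pi$ of $\{-n,\dots,-1,1,\dots,n\}$ with $\pi(-i)=-\pi(i)$. Its Coxeter generators are $s_0=(-1,1)$ and $s_k=(k,k+1)$ for $0<k<n$. The length $l(\pi)$ is the minimal number of generators needed to write $\pi$. Set $q_k=q$ for $k>0$ and $q_0=r$. The Hecke algebra $\mathcal{H}=\mathcal{H}_{q,r}(B_n)$ is the associative algebra over $\mathbb{C}(q,r)$ with basis $\{T_w:w\in B_n\}$ and relations $T_uT_w=T_{uw}$ if $l(uw)=l(u)+l(w)$, and $(T_k+q_k)(T_k-1)=0$ with $T_k=T_{s_k}$. The map $\iota$ is the linear anti-involution of $\mathcal{H}$ determined by $\iota(T_w)=T_{w^{-1}}$ for all $w\in B_n$. Definition of $W_t$: attach independent Poisson clocks of rate $1$ to each $k\in\{1,\dots,n-1\}$ and of rate $\alpha$ to $k=0$. Set $W_0=T_{id}$, and each time the clock of $k$ rings, multiply on the left by $T_k$. *)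

theory Defs
  imports "HOL-Probability.Probability"
begin

text \<open>A signed permutation of {-n..-1,1..n} is represented as a bijection of int that
  is odd (pi(-i) = -pi(i)) and fixes every i with |i| > n (hence also 0).
  The group product is composition: (pi sigma)(i) = pi(sigma(i)).\<close>

definition Bn :: "nat \<Rightarrow> (int \<Rightarrow> int) set" where
  "Bn n = {\<pi>. bij \<pi> \<and> (\<forall>i. \<pi> (-i) = - \<pi> i) \<and> (\<forall>i. \<bar>i\<bar> > int n \<longrightarrow> \<pi> i = i)}"

definition gen :: "nat \<Rightarrow> int \<Rightarrow> int" where
  "gen k = (if k = 0 then (\<lambda>i. if i = 1 then -1 else if i = -1 then 1 else i)
            else (\<lambda>i. if i = int k then int k + 1 else if i = int k + 1 then int k
                      else if i = - int k then - int k - 1 else if i = - int k - 1 then - int k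
                      else i))"

definition word_prod :: "nat list \<Rightarrow> int \<Rightarrow> int" where
  "word_prod ks = foldr (\<lambda>k f. gen k \<circ> f) ks id"

definition len :: "nat \<Rightarrow> (int \<Rightarrow> int) \<Rightarrow> nat" where
  "len n \<pi> = (LEAST m. \<exists>ks. length ks = m \<and> set ks \<subseteq> {0..<n} \<and> word_prod ks = \<pi>)"

text \<open>An element sum_w c_w T_w is represented by its coefficient function
  c :: (int => int) => real (with support in Bn n).  The basis element T_w:\<close>
definition basisT :: "(int \<Rightarrow> int) \<Rightarrow> ((int \<Rightarrow> int) \<Rightarrow> real)" where
  "basisT w = (\<lambda>v. if v = w then 1 else 0)"

definition qpar :: "real \<Rightarrow> real \<Rightarrow> nat \<Rightarrow> real" where
  "qpar q r k = (if k = 0 then r else q)"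

text \<open>Left multiplication by T_k = T_{s_k}, extended linearly from the rules
  T_s T_w = T_{sw} if l(sw) = l(w)+1, and T_s T_w = (1-q_s) T_w + q_s T_{sw} if l(sw) < l(w)
  (the latter from T_s^2 = (1-q_s) T_s + q_s, i.e. (T_s+q_s)(T_s-1)=0).\<close>
definition Tmul :: "nat \<Rightarrow> real \<Rightarrow> real \<Rightarrow> nat \<Rightarrow> ((int \<Rightarrow> int) \<Rightarrow> real) \<Rightarrow> ((int \<Rightarrow> int) \<Rightarrow> real)" where
  "Tmul n q r k h = (\<lambda>v.
     if v \<notin> Bn n then 0
     else if len n (gen k \<circ> v) < len n v then h (gen k \<circ> v) + (1 - qpar q r k) * h v
     else qpar q r k * h (gen k \<circ> v))"

definition iota :: "nat \<Rightarrow> ((int \<Rightarrow> int) \<Rightarrow> real) \<Rightarrow> ((int \<Rightarrow> int) \<Rightarrow> real)" where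
  "iota n h = (\<lambda>w. if w \<in> Bn n then h (inv w) else 0)"

text \<open>Given the chronological list of rung clocks [k_1,...,k_m],
  W = T_{k_m} ... T_{k_1} T_id.\<close>
definition Wword :: "nat \<Rightarrow> real \<Rightarrow> real \<Rightarrow> nat list \<Rightarrow> ((int \<Rightarrow> int) \<Rightarrow> real)" where
  "Wword n q r ks = foldl (\<lambda>h k. Tmul n q r k h) (basisT id) ks"

text \<open>Independent Poisson clocks of rate alpha (at k = 0) and rate 1 (at k = 1..n-1):
  by superposition, the number of rings in [0,t] is Poisson((alpha + n - 1) t) and
  the labels of the successive rings are i.i.d., equal to k with probability
  rate_k / (alpha + n - 1), independent of the number of rings.\<close>
definition label_pmf :: "nat \<Rightarrow> real \<Rightarrow> nat pmf" where
  "label_pmf n \<alpha> = do {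
     b \<leftarrow> bernoulli_pmf (\<alpha> / (\<alpha> + real n - 1));
     if b then return_pmf 0 else map_pmf Suc (pmf_of_set {0..<n - 1}) }"

definition rings_pmf :: "nat \<Rightarrow> real \<Rightarrow> real \<Rightarrow> nat list pmf" where
  "rings_pmf n \<alpha> t = do {
     m \<leftarrow> (if t = 0 then return_pmf 0 else poisson_pmf ((\<alpha> + real n - 1) * t));
     replicate_pmf m (label_pmf n \<alpha>) }"

definition W_law :: "nat \<Rightarrow> real \<Rightarrow> real \<Rightarrow> real \<Rightarrow> real \<Rightarrow> ((int \<Rightarrow> int) \<Rightarrow> real) pmf" where
  "W_law n q r \<alpha> t = map_pmf (Wword n q r) (rings_pmf n \<alpha> t)"

end

theory Submission
  imports Defs
begin

text \<open>Write \<open>W(k\<^sub>1 \<dots> k\<^sub>m) = T\<^sub>k\<^sub>m \<cdots> T\<^sub>k\<^sub>1\<close> for the walk after the rings \<open>k\<^sub>1, \<dots>, k\<^sub>m\<close>.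
  Since \<open>\<iota>\<close> is an anti-involution, \<open>\<iota> T\<^sub>j \<iota>\<close> is right multiplication by \<open>T\<^sub>j\<close>, which
  commutes with left multiplication by any \<open>T\<^sub>k\<close>; hence \<open>\<iota>(W(ks)) = W(rev ks)\<close>.
  Given their number, the ring labels are i.i.d., so \<open>rev ks\<close> has the same law as \<open>ks\<close>.

  On coefficients, the commutation of left and right multiplication reduces to the
  exchange property of \<open>B\<^sub>n\<close>: if \<open>l(v s\<^sub>j) > l(v)\<close> and \<open>l(s\<^sub>k v s\<^sub>j) < l(s\<^sub>k v)\<close>, then
  \<open>s\<^sub>k v = v s\<^sub>j\<close>. To verify it, the length is computed from an inversion count,
  which changes by \<open>\<plusminus>2\<close> under right multiplication by a generator.\<close>

section \<open>Signed permutations\<close>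

lemma gen_gen [simp]: "gen k (gen k x) = x"
  unfolding gen_def by auto

lemma gen_comp_gen [simp]: "gen k \<circ> gen k = id"
  by (auto simp: fun_eq_iff)

lemma bij_gen: "bij (gen k)"
  using o_bij[OF gen_comp_gen gen_comp_gen] .

lemma inv_gen: "inv (gen k) = gen k"
  by (rule inv_unique_comp) auto

lemma gen_minus: "gen k (- i) = - gen k i"
  unfolding gen_def by auto

lemma gen_in_Bn: "k < n \<Longrightarrow> gen k \<in> Bn n"
  unfolding Bn_def using bij_gen gen_minus by (auto simp: gen_def)

lemma BnD:
  assumes "w \<in> Bn n"
  shows "bij w" "w (- i) = - w i" "int n < \<bar>i\<bar> \<Longrightarrow> w i = i"
  using assms unfolding Bn_def by auto

lemma Bn_zero: "w \<in> Bn n \<Longrightarrow> w 0 = 0"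
  using BnD(2)[of w n 0] by simp

lemma Bn_eq_iff: "w \<in> Bn n \<Longrightarrow> w x = w y \<longleftrightarrow> x = y"
  using BnD(1) bij_is_inj inj_eq by metis

lemma Bn_abs_le:
  assumes w: "w \<in> Bn n" and i: "\<bar>i\<bar> \<le> int n"
  shows "\<bar>w i\<bar> \<le> int n"
proof (rule ccontr)
  assume out: "\<not> \<bar>w i\<bar> \<le> int n"
  then have "w (w i) = w i" using BnD(3)[OF w] by simp
  then have "w i = i" using Bn_eq_iff[OF w] by simp
  then show False using out i by simp
qed

lemma Bn_comp: "v \<in> Bn n \<Longrightarrow> w \<in> Bn n \<Longrightarrow> v \<circ> w \<in> Bn n"
  unfolding Bn_def by (auto intro: bij_comp)

lemma id_in_Bn: "id \<in> Bn n"
  unfolding Bn_def by auto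

lemma inv_in_Bn:
  assumes w: "w \<in> Bn n"
  shows "inv w \<in> Bn n"
proof -
  have b: "bij w" using BnD(1)[OF w] .
  have "inv w (- i) = - inv w i" for i
    using BnD(2)[OF w, of "inv w i"] bij_inv_eq_iff[OF b] by metis
  moreover have "int n < \<bar>i\<bar> \<Longrightarrow> inv w i = i" for i
    using BnD(3)[OF w] bij_inv_eq_iff[OF b] by metis
  ultimately show ?thesis unfolding Bn_def using bij_imp_bij_inv[OF b] by auto
qed

lemma inv_inv_Bn: "w \<in> Bn n \<Longrightarrow> inv (inv w) = w"
  using BnD(1) inv_inv_eq by metis

lemma inv_comp_gen: "w \<in> Bn n \<Longrightarrow> inv (w \<circ> gen k) = gen k \<circ> inv w"
  using o_inv_distrib[of w "gen k"] BnD(1) bij_gen inv_gen by metis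

lemma inv_gen_comp: "w \<in> Bn n \<Longrightarrow> inv (gen k \<circ> w) = inv w \<circ> gen k"
  using o_inv_distrib[of "gen k" w] BnD(1) bij_gen inv_gen by metis

lemma word_prod_Nil [simp]: "word_prod [] = id"
  unfolding word_prod_def by simp

lemma word_prod_Cons [simp]: "word_prod (k # ks) = gen k \<circ> word_prod ks"
  unfolding word_prod_def by simp

lemma word_prod_snoc: "word_prod (ks @ [k]) = word_prod ks \<circ> gen k"
  by (induction ks) (auto simp: comp_assoc)

lemma word_prod_in_Bn: "set ks \<subseteq> {0..<n} \<Longrightarrow> word_prod ks \<in> Bn n"
  by (induction ks) (auto intro: Bn_comp gen_in_Bn id_in_Bn)

lemma word_prod_rev: "word_prod (rev ks) = inv (word_prod ks)"
proof -
  have cancel: "word_prod (rev ks) \<circ> word_prod ks = id" for ks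
  proof (induction ks)
    case (Cons k ks)
    have "word_prod (rev (k # ks)) \<circ> word_prod (k # ks)
        = word_prod (rev ks) \<circ> (gen k \<circ> gen k) \<circ> word_prod ks"
      by (simp add: word_prod_snoc fun_eq_iff)
    also have "\<dots> = id" by (simp only: gen_comp_gen comp_id Cons.IH)
    finally show ?case .
  qed simp
  show ?thesis
    using cancel[of ks] cancel[of "rev ks"] by (metis inv_unique_comp rev_rev_ident)
qed

section \<open>The length function\<close>

definition window :: "nat \<Rightarrow> int set" where
  "window n = {- int n..int n}"

definition inversions :: "nat \<Rightarrow> (int \<Rightarrow> int) \<Rightarrow> int" where
  "inversions n w = (\<Sum>(x, y)\<in>window n \<times> window n. if x < y \<and> w y < w x then 1 else 0)"

definition negatives :: "nat \<Rightarrow> (int \<Rightarrow> int) \<Rightarrow> int" where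
  "negatives n w = (\<Sum>x\<in>window n. if 0 < x \<and> w x < 0 then 1 else 0)"

text \<open>On the window \<open>{-n..n}\<close> every inversion of the signed permutation \<open>w\<close> is counted
  twice, except that a sign change \<open>w i < 0\<close> with \<open>i > 0\<close> is counted three times.\<close>

definition twice_len :: "nat \<Rightarrow> (int \<Rightarrow> int) \<Rightarrow> int" where
  "twice_len n w = inversions n w - negatives n w"

definition descent :: "(int \<Rightarrow> int) \<Rightarrow> nat \<Rightarrow> bool" where
  "descent w k \<longleftrightarrow> (if k = 0 then w 1 < 0 else w (int k + 1) < w (int k))"

lemma finite_window [simp]: "finite (window n)"
  unfolding window_def by simp

lemma gen_in_window: "k < n \<Longrightarrow> x \<in> window n \<Longrightarrow> gen k x \<in> window n"
  unfolding window_def gen_def by auto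

lemma inversions_comp_involution:
  fixes \<sigma> :: "int \<Rightarrow> int"
  assumes maps: "\<And>x. x \<in> window n \<Longrightarrow> \<sigma> x \<in> window n" and invol: "\<And>x. \<sigma> (\<sigma> x) = x"
    and S: "S \<subseteq> window n \<times> window n"
    and order: "\<And>x y. x \<in> window n \<Longrightarrow> y \<in> window n \<Longrightarrow> (x, y) \<notin> S \<Longrightarrow> \<sigma> x < \<sigma> y \<longleftrightarrow> x < y"
  shows "inversions n (w \<circ> \<sigma>) = inversions n w +
    (\<Sum>(x, y)\<in>S. (if \<sigma> x < \<sigma> y \<and> w y < w x then 1 else 0) - (if x < y \<and> w y < w x then 1 else 0))"
proof -
  let ?W = "window n \<times> window n"
  let ?A = "\<lambda>(x, y). if \<sigma> x < \<sigma> y \<and> w y < w x then 1 else (0::int)"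
  let ?B = "\<lambda>(x, y). if x < y \<and> w y < w x then 1 else (0::int)"
  have "inversions n (w \<circ> \<sigma>) = (\<Sum>p\<in>?W. ?A p)"
    unfolding inversions_def
    by (rule sum.reindex_bij_witness[of _ "map_prod \<sigma> \<sigma>" "map_prod \<sigma> \<sigma>"]) (auto simp: maps invol)
  also have "\<dots> = inversions n w + (\<Sum>p\<in>?W. ?A p - ?B p)"
    unfolding inversions_def sum_subtractf[of ?A ?B] by simp
  also have "(\<Sum>p\<in>?W. ?A p - ?B p) = (\<Sum>p\<in>S. ?A p - ?B p)"
    by (rule sum.mono_neutral_right) (auto simp: S order)
  finally show ?thesis by (simp only: case_prod_unfold)
qed

lemma negatives_comp_involution:
  fixes \<sigma> :: "int \<Rightarrow> int"
  assumes maps: "\<And>x. x \<in> window n \<Longrightarrow> \<sigma> x \<in> window n" and invol: "\<And>x. \<sigma> (\<sigma> x) = x"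
    and S: "S \<subseteq> window n"
    and sign: "\<And>x. x \<in> window n \<Longrightarrow> x \<notin> S \<Longrightarrow> 0 < \<sigma> x \<longleftrightarrow> 0 < x"
  shows "negatives n (w \<circ> \<sigma>) = negatives n w +
    (\<Sum>x\<in>S. (if 0 < \<sigma> x \<and> w x < 0 then 1 else 0) - (if 0 < x \<and> w x < 0 then 1 else 0))"
proof -
  let ?A = "\<lambda>x. if 0 < \<sigma> x \<and> w x < 0 then 1 else (0::int)"
  let ?B = "\<lambda>x. if 0 < x \<and> w x < 0 then 1 else (0::int)"
  have "negatives n (w \<circ> \<sigma>) = (\<Sum>x\<in>window n. ?A x)"
    unfolding negatives_def by (rule sum.reindex_bij_witness[of _ \<sigma> \<sigma>]) (auto simp: maps invol)
  also have "\<dots> = negatives n w + (\<Sum>x\<in>window n. ?A x - ?B x)"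
    unfolding negatives_def sum_subtractf[of ?A ?B] by simp
  also have "(\<Sum>x\<in>window n. ?A x - ?B x) = (\<Sum>x\<in>S. ?A x - ?B x)"
    by (rule sum.mono_neutral_right) (auto simp: S sign)
  finally show ?thesis .
qed

lemma twice_len_comp_gen0:
  assumes w: "w \<in> Bn n" and n: "0 < n"
  shows "twice_len n (w \<circ> gen 0) = twice_len n w + (if descent w 0 then -2 else 2)"
proof -
  define S :: "(int \<times> int) set" where "S = {(-1, 0), (0, -1), (0, 1), (1, 0), (-1, 1), (1, -1)}"
  have w0: "w 0 = 0" and w_minus: "w (- 1) = - w 1" and w1: "w 1 \<noteq> 0"
    using Bn_zero[OF w] BnD(2)[OF w, of 1] Bn_eq_iff[OF w, of 1 0] by auto
  have g: "gen 0 1 = -1" "gen 0 (-1) = 1" "gen 0 0 = 0"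
    unfolding gen_def by auto
  have "inversions n (w \<circ> gen 0) = inversions n w +
    (\<Sum>(x, y)\<in>S. (if gen 0 x < gen 0 y \<and> w y < w x then 1 else 0) - (if x < y \<and> w y < w x then 1 else 0))"
  proof (rule inversions_comp_involution)
    show "S \<subseteq> window n \<times> window n" using n unfolding S_def window_def by auto
    show "gen 0 x < gen 0 y \<longleftrightarrow> x < y" if "(x, y) \<notin> S" for x y
      using that unfolding S_def gen_def by auto
  qed (auto simp: gen_in_window n)
  also have "(\<Sum>(x, y)\<in>S. (if gen 0 x < gen 0 y \<and> w y < w x then 1 else 0) - (if x < y \<and> w y < w x then 1 else 0))
      = (if descent w 0 then -3 else 3 :: int)"
    using w1 by (auto simp: S_def g w0 w_minus descent_def)
  finally have inv: "inversions n (w \<circ> gen 0) = inversions n w + (if descent w 0 then -3 else 3)" .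
  have "negatives n (w \<circ> gen 0) = negatives n w +
    (\<Sum>x\<in>{-1, 1}. (if 0 < gen 0 x \<and> w x < 0 then 1 else 0) - (if 0 < x \<and> w x < 0 then 1 else 0))"
  proof (rule negatives_comp_involution)
    show "{-1, 1} \<subseteq> window n" using n unfolding window_def by auto
    show "0 < gen 0 x \<longleftrightarrow> 0 < x" if "x \<notin> {-1, 1}" for x
      using that unfolding gen_def by auto
  qed (auto simp: gen_in_window n)
  also have "(\<Sum>x\<in>{-1, 1}. (if 0 < gen 0 x \<and> w x < 0 then 1 else 0) - (if 0 < x \<and> w x < 0 then 1 else 0))
      = (if descent w 0 then -1 else 1 :: int)"
    using w1 by (auto simp: g w_minus descent_def)
  finally show ?thesis
    using inv unfolding twice_len_def comp_def by simp
qed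

lemma gen_less_gen_iff:
  assumes k: "0 < k"
    and xy: "(x, y) \<notin> {(int k, int k + 1), (int k + 1, int k), (- int k - 1, - int k), (- int k, - int k - 1)}"
  shows "gen k x < gen k y \<longleftrightarrow> x < y"
proof -
  have up: "gen k x \<le> x + 1 \<and> (gen k x = x + 1 \<longrightarrow> x = int k \<or> x = - int k - 1)" for x
    using k unfolding gen_def by auto
  have down: "x - 1 \<le> gen k x \<and> (gen k x = x - 1 \<longrightarrow> x = int k + 1 \<or> x = - int k)" for x
    using k unfolding gen_def by auto
  have inj: "gen k x = gen k y \<longleftrightarrow> x = y" for x y
    by (metis gen_gen)
  have mono: "gen k x < gen k y"
    if "x < y" "(x, y) \<notin> {(int k, int k + 1), (- int k - 1, - int k)}" for x y
  proof (rule ccontr)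
    assume "\<not> gen k x < gen k y"
    then have "gen k y < gen k x" using inj[of x y] that(1) by fastforce
    then have "y = x + 1" "gen k x = x + 1" "gen k y = y - 1"
      using up[of x] down[of y] that(1) by linarith+
    then show False using up[of x] down[of y] that(2) by auto
  qed
  show ?thesis
    using mono[of x y] mono[of y x] xy inj[of x y] by fastforce
qed

lemma twice_len_comp_gen_pos:
  assumes w: "w \<in> Bn n" and k: "0 < k" "k < n"
  shows "twice_len n (w \<circ> gen k) = twice_len n w + (if descent w k then -2 else 2)"
proof -
  define K where "K = int k"
  define S where "S = {(K, K + 1), (K + 1, K), (- K - 1, - K), (- K, - K - 1)}"
  have K: "1 \<le> K" "K + 1 \<le> int n" using k unfolding K_def by auto
  have "- K - 1 = - (K + 1)" by simp
  then have w_minus: "w (- K) = - w K" "w (- K - 1) = - w (K + 1)"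
    using BnD(2)[OF w, of K] BnD(2)[OF w, of "K + 1"] by simp_all
  have wK: "w K \<noteq> w (K + 1)" using Bn_eq_iff[OF w] by simp
  have g: "gen k K = K + 1" "gen k (K + 1) = K" "gen k (- K) = - K - 1" "gen k (- K - 1) = - K"
    using K unfolding gen_def K_def by auto
  have "inversions n (w \<circ> gen k) = inversions n w +
    (\<Sum>(x, y)\<in>S. (if gen k x < gen k y \<and> w y < w x then 1 else 0) - (if x < y \<and> w y < w x then 1 else 0))"
  proof (rule inversions_comp_involution)
    show "S \<subseteq> window n \<times> window n" using K unfolding S_def window_def by auto
    show "gen k x < gen k y \<longleftrightarrow> x < y" if "(x, y) \<notin> S" for x y
      using that gen_less_gen_iff[OF k(1)] unfolding S_def K_def by blast
  qed (auto simp: gen_in_window k)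
  also have "(\<Sum>(x, y)\<in>S. (if gen k x < gen k y \<and> w y < w x then 1 else 0) - (if x < y \<and> w y < w x then 1 else 0))
      = (if descent w k then -2 else 2 :: int)"
    using K wK k by (auto simp: S_def g w_minus descent_def K_def[symmetric])
  finally have "inversions n (w \<circ> gen k) = inversions n w + (if descent w k then -2 else 2)" .
  moreover have "negatives n (w \<circ> gen k) = negatives n w"
  proof -
    have "0 < gen k x \<longleftrightarrow> 0 < x" for x
      using k unfolding gen_def by auto
    then show ?thesis
      using negatives_comp_involution[of n "gen k" "{}" w] gen_in_window[OF k(2)] by simp
  qed
  ultimately show ?thesis
    unfolding twice_len_def by simp
qed

lemma twice_len_comp_gen:
  assumes "w \<in> Bn n" "k < n"
  shows "twice_len n (w \<circ> gen k) = twice_len n w + (if descent w k then -2 else 2)"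
  using twice_len_comp_gen0[OF assms(1)] twice_len_comp_gen_pos[OF assms(1) _ assms(2)] assms(2)
  by (cases "k = 0") auto

lemma twice_len_nonneg:
  assumes w: "w \<in> Bn n"
  shows "0 \<le> twice_len n w"
proof -
  let ?inv = "\<lambda>x y. if x < y \<and> w y < w x then 1 else (0::int)"
  have "negatives n w = (\<Sum>y\<in>window n. ?inv 0 y)"
    unfolding negatives_def using Bn_zero[OF w] by simp
  also have "\<dots> \<le> (\<Sum>x\<in>window n. \<Sum>y\<in>window n. ?inv x y)"
    by (rule member_le_sum) (auto simp: window_def intro: sum_nonneg)
  also have "\<dots> = inversions n w"
    unfolding inversions_def by (simp add: sum.cartesian_product)
  finally show ?thesis
    unfolding twice_len_def by simp
qed

lemma twice_len_id: "twice_len n id = 0"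
proof -
  have "inversions n id = 0"
    unfolding inversions_def by (rule sum.neutral) auto
  moreover have "negatives n id = 0"
    unfolding negatives_def by (rule sum.neutral) auto
  ultimately show ?thesis
    unfolding twice_len_def by simp
qed

lemma Bn_eq_id_if_fixes_pos:
  assumes w: "w \<in> Bn n" and fixes_pos: "\<And>i. 0 < i \<Longrightarrow> i \<le> int n \<Longrightarrow> w i = i"
  shows "w = id"
proof
  fix x
  consider "int n < \<bar>x\<bar>" | "0 < x" "x \<le> int n" | "x = 0" | "x < 0" "- int n \<le> x"
    by linarith
  then show "w x = id x"
  proof cases
    case 4
    then show ?thesis using fixes_pos[of "- x"] BnD(2)[OF w, of "- x"] by simp
  qed (use BnD(3)[OF w] fixes_pos Bn_zero[OF w] in auto)
qed

lemma no_descent_imp_id: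
  assumes w: "w \<in> Bn n" and no_descent: "\<And>k. k < n \<Longrightarrow> \<not> descent w k"
  shows "w = id"
proof -
  have step: "w (int k) < w (int k + 1)" if "0 < k" "k < n" for k
    using no_descent[OF that(2)] that(1) Bn_eq_iff[OF w, of "int k" "int k + 1"]
    unfolding descent_def by auto
  have lower: "int i \<le> w (int i)" if "0 < i" "i \<le> n" for i
    using that
  proof (induction i)
    case (Suc i)
    show ?case
    proof (cases "i = 0")
      case True
      have "0 \<le> w 1" using no_descent[of 0] Suc.prems unfolding descent_def by simp
      moreover have "w 1 \<noteq> 0" using Bn_eq_iff[OF w, of 1 0] Bn_zero[OF w] by simp
      ultimately show ?thesis using True by simp
    next
      case False
      then have "int i + 1 \<le> w (int i + 1)" using Suc step[of i] by simp
      then show ?thesis by (simp add: add.commute)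
    qed
  qed simp
  have upper: "w (int n - int j) \<le> int n - int j" if "j < n" for j
    using that
  proof (induction j)
    case 0
    show ?case using Bn_abs_le[OF w, of "int n"] by simp
  next
    case (Suc j)
    have "int (n - Suc j) + 1 = int n - int j" "int (n - Suc j) = int n - int (Suc j)"
      using Suc.prems by auto
    then show ?case using Suc step[of "n - Suc j"] by fastforce
  qed
  have "w i = i" if "0 < i" "i \<le> int n" for i
    using lower[of "nat i"] upper[of "n - nat i"] that by simp
  then show ?thesis using Bn_eq_id_if_fixes_pos[OF w] by blast
qed

lemma twice_len_word_prod_le:
  "set ks \<subseteq> {0..<n} \<Longrightarrow> twice_len n (word_prod ks) \<le> 2 * int (length ks)"
proof (induction ks rule: rev_induct)
  case (snoc k ks)
  have "word_prod ks \<in> Bn n" "k < n"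
    using snoc.prems by (auto intro: word_prod_in_Bn)
  then have "twice_len n (word_prod (ks @ [k]))
      = twice_len n (word_prod ks) + (if descent (word_prod ks) k then -2 else 2)"
    unfolding word_prod_snoc by (rule twice_len_comp_gen)
  then show ?case using snoc by auto
qed (simp add: twice_len_id)

lemma word_of_length_twice_len:
  assumes "w \<in> Bn n"
  shows "\<exists>ks. set ks \<subseteq> {0..<n} \<and> word_prod ks = w \<and> 2 * int (length ks) = twice_len n w"
  using assms
proof (induction "nat (twice_len n w)" arbitrary: w rule: less_induct)
  case less
  note w = less.prems
  show ?case
  proof (cases "\<exists>k<n. descent w k")
    case False
    then show ?thesis
      using no_descent_imp_id[OF w] twice_len_id by (intro exI[of _ "[]"]) auto
  next
    case True
    then obtain k where k: "k < n" "descent w k" by blast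
    have wk: "w \<circ> gen k \<in> Bn n" using w k by (intro Bn_comp gen_in_Bn)
    have shorter: "twice_len n (w \<circ> gen k) = twice_len n w - 2"
      using twice_len_comp_gen[OF w k(1)] k(2) by simp
    then have "nat (twice_len n (w \<circ> gen k)) < nat (twice_len n w)"
      using twice_len_nonneg[OF wk] by simp
    from less.hyps[OF this wk] obtain ks where
      ks: "set ks \<subseteq> {0..<n}" "word_prod ks = w \<circ> gen k" "2 * int (length ks) = twice_len n (w \<circ> gen k)"
      by blast
    have "word_prod (ks @ [k]) = w" using ks(2) by (simp add: word_prod_snoc comp_assoc)
    then show ?thesis using ks k shorter by (intro exI[of _ "ks @ [k]"]) auto
  qed
qed

lemma len_le_length: "set ks \<subseteq> {0..<n} \<Longrightarrow> word_prod ks = w \<Longrightarrow> len n w \<le> length ks"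
  unfolding len_def by (rule Least_le) blast

lemma twice_len_eq_len:
  assumes w: "w \<in> Bn n"
  shows "twice_len n w = 2 * int (len n w)"
proof -
  obtain ks where ks: "set ks \<subseteq> {0..<n}" "word_prod ks = w" "2 * int (length ks) = twice_len n w"
    using word_of_length_twice_len[OF w] by blast
  have "len n w = length ks"
    unfolding len_def
  proof (rule Least_equality)
    fix m
    assume "\<exists>ks'. length ks' = m \<and> set ks' \<subseteq> {0..<n} \<and> word_prod ks' = w"
    then show "length ks \<le> m"
      using twice_len_word_prod_le ks(3) by fastforce
  qed (use ks in blast)
  then show ?thesis using ks(3) by simp
qed

lemma reduced_word_exists:
  assumes "w \<in> Bn n"
  obtains ks where "set ks \<subseteq> {0..<n}" "word_prod ks = w" "length ks = len n w"
  using word_of_length_twice_len[OF assms] twice_len_eq_len[OF assms] by force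

lemma len_comp_gen:
  assumes "w \<in> Bn n" "k < n"
  shows "int (len n (w \<circ> gen k)) = int (len n w) + (if descent w k then -1 else 1)"
  using twice_len_eq_len[OF Bn_comp[OF assms(1) gen_in_Bn[OF assms(2)]]]
    twice_len_eq_len[OF assms(1)] twice_len_comp_gen[OF assms] by auto

lemma len_inv:
  assumes w: "w \<in> Bn n"
  shows "len n (inv w) = len n w"
proof -
  have le: "len n (inv v) \<le> len n v" if v: "v \<in> Bn n" for v
  proof -
    obtain ks where "set ks \<subseteq> {0..<n}" "word_prod ks = v" "length ks = len n v"
      using reduced_word_exists[OF v] .
    then show ?thesis using len_le_length[of "rev ks" n] word_prod_rev[of ks] by simp
  qed
  show ?thesis
    using le[OF w] le[OF inv_in_Bn[OF w]] inv_inv_Bn[OF w] by simp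
qed

lemma len_gen_comp:
  assumes w: "w \<in> Bn n" and k: "k < n"
  shows "int (len n (gen k \<circ> w)) = int (len n w) + (if descent (inv w) k then -1 else 1)"
proof -
  have "len n (gen k \<circ> w) = len n (inv w \<circ> gen k)"
    using len_inv[OF Bn_comp[OF gen_in_Bn[OF k] w]] inv_gen_comp[OF w] by simp
  then show ?thesis
    using len_comp_gen[OF inv_in_Bn[OF w] k] len_inv[OF w] by simp
qed

lemma descent_iff_len_less:
  "w \<in> Bn n \<Longrightarrow> k < n \<Longrightarrow> descent w k \<longleftrightarrow> len n (w \<circ> gen k) < len n w"
  using len_comp_gen[of w n k] by (cases "descent w k") auto

section \<open>The exchange property\<close>

lemma gen_determined_by_moved_point:
  assumes "0 < k" "gen k a = b" "a \<noteq> b"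
  shows "gen k y = (if y = a then b else if y = b then a else if y = - a then - b else if y = - b then - a else y)"
proof -
  let ?M = "{int k, int k + 1, - int k, - int k - 1}"
  have moved: "gen k y \<noteq> y \<Longrightarrow> y \<in> ?M" for y
    using assms(1) unfolding gen_def by (auto split: if_splits)
  have "{a, b, - a, - b} = ?M"
    using moved[of a] assms unfolding gen_def by auto
  then have fixed: "y \<notin> {a, b, - a, - b} \<Longrightarrow> gen k y = y"
    using moved by blast
  show ?thesis
    using fixed assms(2) gen_gen[of k a] gen_minus[of k a] gen_minus[of k b] by auto
qed

lemma gen_comp_eq_comp_gen_if_agree:
  assumes x: "x \<in> Bn n" and k: "0 < k" and j: "0 < j"
    and agree: "gen k (x (int j)) = x (int j + 1)"
  shows "gen k \<circ> x = x \<circ> gen j"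
proof
  fix i
  have odd: "x (- y) = - x y" for y using BnD(2)[OF x] .
  have inj: "x a = x b \<longleftrightarrow> a = b" for a b using Bn_eq_iff[OF x] .
  have odd_succ: "x (- int j - 1) = - x (int j + 1)" using odd[of "int j + 1"] by simp
  have inj_minus: "x a = - x b \<longleftrightarrow> a = - b" for a b using inj[of a "- b"] odd[of b] by simp
  have gk: "gen k y = (if y = x (int j) then x (int j + 1) else if y = x (int j + 1) then x (int j)
      else if y = - x (int j) then - x (int j + 1) else if y = - x (int j + 1) then - x (int j) else y)" for y
    by (rule gen_determined_by_moved_point[OF k agree]) (simp add: inj)
  have gj: "gen j y = (if y = int j then int j + 1 else if y = int j + 1 then int j
      else if y = - int j then - (int j + 1) else if y = - (int j + 1) then - int j else y)" for y
    by (rule gen_determined_by_moved_point[OF j]) (use j in \<open>auto simp: gen_def\<close>)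
  show "(gen k \<circ> x) i = (x \<circ> gen j) i"
    by (auto simp: gk gj odd odd_succ inj inj_minus)
qed

lemma gen_comp_eq_comp_gen0:
  assumes x: "x \<in> Bn n" and no_desc: "\<not> descent x 0" and desc: "descent (gen k \<circ> x) 0"
  shows "k = 0 \<and> gen k \<circ> x = x \<circ> gen 0"
proof -
  have pos: "0 < x 1"
    using no_desc Bn_eq_iff[OF x, of 1 0] Bn_zero[OF x] unfolding descent_def by force
  have neg: "gen k (x 1) < 0"
    using desc unfolding descent_def by simp
  have k: "k = 0" and x1: "x 1 = 1"
    using pos neg unfolding gen_def by (auto split: if_splits)
  have "gen 0 (x i) = x (gen 0 i)" for i
    using Bn_eq_iff[OF x, of i 1] Bn_eq_iff[OF x, of i "- 1"] BnD(2)[OF x, of 1] x1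
    unfolding gen_def by auto
  then show ?thesis using k by (auto simp: fun_eq_iff)
qed

lemma gen_comp_eq_comp_gen_pos:
  assumes x: "x \<in> Bn n" and j: "0 < j"
    and no_desc: "\<not> descent x j" and desc: "descent (gen k \<circ> x) j"
  shows "0 < k \<and> gen k \<circ> x = x \<circ> gen j"
proof -
  define a b where "a = x (int j)" and "b = x (int j + 1)"
  have ab: "a < b"
    using no_desc j Bn_eq_iff[OF x, of "int j" "int j + 1"] unfolding descent_def a_def b_def by auto
  have ba: "gen k b < gen k a"
    using desc j unfolding descent_def a_def b_def by simp
  have k: "0 < k"
  proof (rule ccontr)
    assume "\<not> 0 < k"
    moreover have "a \<noteq> 0" "b \<noteq> 0"
      using Bn_eq_iff[OF x, of _ 0] Bn_zero[OF x] j unfolding a_def b_def by auto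
    ultimately have "a = - 1" "b = 1"
      using ab ba unfolding gen_def by (auto split: if_splits)
    then have "x (- int j) = x (int j + 1)"
      using BnD(2)[OF x, of "int j"] unfolding a_def b_def by simp
    then show False using Bn_eq_iff[OF x] by simp
  qed
  have "(a, b) = (int k, int k + 1) \<or> (a, b) = (- int k - 1, - int k)"
    using gen_less_gen_iff[OF k, of a b] ab ba by auto
  then have "gen k a = b"
    using k unfolding gen_def by auto
  then show ?thesis
    using gen_comp_eq_comp_gen_if_agree[OF x k j] k unfolding a_def b_def by simp
qed

lemma gen_comp_eq_comp_gen:
  assumes x: "x \<in> Bn n" and k: "k < n" and j: "j < n"
    and up: "len n x < len n (x \<circ> gen j)" and down: "len n (gen k \<circ> x \<circ> gen j) < len n (gen k \<circ> x)"
  shows "gen k \<circ> x = x \<circ> gen j \<and> (k = 0 \<longleftrightarrow> j = 0)"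
proof -
  have "\<not> descent x j"
    using up descent_iff_len_less[OF x j] by simp
  moreover have "descent (gen k \<circ> x) j"
    using down descent_iff_len_less[OF Bn_comp[OF gen_in_Bn[OF k] x] j] by simp
  ultimately show ?thesis
    using gen_comp_eq_comp_gen0[OF x] gen_comp_eq_comp_gen_pos[OF x] by (cases "j = 0") auto
qed

section \<open>Left and right multiplication by generators\<close>

definition Tmul_right ::
    "nat \<Rightarrow> real \<Rightarrow> real \<Rightarrow> nat \<Rightarrow> ((int \<Rightarrow> int) \<Rightarrow> real) \<Rightarrow> ((int \<Rightarrow> int) \<Rightarrow> real)" where
  "Tmul_right n q r j h = iota n (Tmul n q r j (iota n h))"

lemma iota_inv: "w \<in> Bn n \<Longrightarrow> iota n h (inv w) = h w"
  unfolding iota_def using inv_in_Bn inv_inv_Bn by simp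

lemma Tmul_eval:
  "v \<in> Bn n \<Longrightarrow> Tmul n q r k h v = (if len n (gen k \<circ> v) < len n v
     then h (gen k \<circ> v) + (1 - qpar q r k) * h v else qpar q r k * h (gen k \<circ> v))"
  unfolding Tmul_def by simp

lemma Tmul_right_eval:
  assumes v: "v \<in> Bn n" and j: "j < n"
  shows "Tmul_right n q r j h v = (if len n (v \<circ> gen j) < len n v
     then h (v \<circ> gen j) + (1 - qpar q r j) * h v else qpar q r j * h (v \<circ> gen j))"
proof -
  have vj: "v \<circ> gen j \<in> Bn n" using Bn_comp[OF v gen_in_Bn[OF j]] .
  have "Tmul_right n q r j h v = Tmul n q r j (iota n h) (inv v)"
    unfolding Tmul_right_def iota_def using v by simp
  also have "\<dots> = (if len n (inv (v \<circ> gen j)) < len n (inv v)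
     then iota n h (inv (v \<circ> gen j)) + (1 - qpar q r j) * iota n h (inv v)
     else qpar q r j * iota n h (inv (v \<circ> gen j)))"
    using Tmul_eval[OF inv_in_Bn[OF v]] inv_comp_gen[OF v] by simp
  finally show ?thesis
    unfolding len_inv[OF v] len_inv[OF vj] iota_inv[OF v] iota_inv[OF vj] .
qed

lemma len_comp_gen_cases:
  "w \<in> Bn n \<Longrightarrow> k < n \<Longrightarrow> len n (w \<circ> gen k) = Suc (len n w) \<or> len n w = Suc (len n (w \<circ> gen k))"
  using len_comp_gen[of w n k] by (cases "descent w k") auto

lemma len_gen_comp_cases:
  "w \<in> Bn n \<Longrightarrow> k < n \<Longrightarrow> len n (gen k \<circ> w) = Suc (len n w) \<or> len n w = Suc (len n (gen k \<circ> w))"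
  using len_gen_comp[of w n k] by (cases "descent (inv w) k") auto

text \<open>Here \<open>a, b, c, d\<close> stand for the lengths of \<open>v, s\<^sub>k v, v s\<^sub>j, s\<^sub>k v s\<^sub>j\<close>.\<close>

lemma commute_coeff_identity:
  fixes a b c d :: nat and ha hb hc hd qk qj :: real
  assumes "b = Suc a \<or> a = Suc b" "c = Suc a \<or> a = Suc c" "d = Suc b \<or> b = Suc d" "d = Suc c \<or> c = Suc d"
    and "a < c \<Longrightarrow> d < b \<Longrightarrow> hb = hc \<and> qk = qj"
    and "b < d \<Longrightarrow> c < a \<Longrightarrow> hb = hc \<and> hd = ha \<and> qk = qj"
  shows "(if b < a then (if d < b then hd + (1 - qj) * hb else qj * hd)
              + (1 - qk) * (if c < a then hc + (1 - qj) * ha else qj * hc)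
          else qk * (if d < b then hd + (1 - qj) * hb else qj * hd))
       = (if c < a then (if d < c then hd + (1 - qk) * hc else qk * hd)
              + (1 - qj) * (if b < a then hb + (1 - qk) * ha else qk * hb)
          else qj * (if d < c then hd + (1 - qk) * hc else qk * hd))"
  using assms(1-4) by (elim disjE) (use assms(5,6) in \<open>auto simp: algebra_simps\<close>)

lemma Tmul_Tmul_right_commute:
  assumes k: "k < n" and j: "j < n"
  shows "Tmul n q r k (Tmul_right n q r j h) = Tmul_right n q r j (Tmul n q r k h)"
proof
  fix v
  show "Tmul n q r k (Tmul_right n q r j h) v = Tmul_right n q r j (Tmul n q r k h) v"
  proof (cases "v \<in> Bn n")
    case False
    then show ?thesis by (simp add: Tmul_def Tmul_right_def iota_def)
  next
    case v: True
    define sv vt svt where "sv = gen k \<circ> v" and "vt = v \<circ> gen j" and "svt = gen k \<circ> v \<circ> gen j"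
    have sv: "sv \<in> Bn n" and vt: "vt \<in> Bn n"
      unfolding sv_def vt_def using v k j by (auto intro: Bn_comp gen_in_Bn)
    have svt: "svt = sv \<circ> gen j" "svt = gen k \<circ> vt"
      unfolding sv_def vt_def svt_def by (simp_all add: comp_assoc)
    have exchange: "h sv = h vt \<and> qpar q r k = qpar q r j"
      if "len n v < len n vt" "len n svt < len n sv"
      using gen_comp_eq_comp_gen[OF v k j] that unfolding sv_def vt_def svt_def qpar_def by auto
    have exchange': "h sv = h vt \<and> h svt = h v \<and> qpar q r k = qpar q r j"
      if "len n sv < len n svt" "len n vt < len n v"
    proof -
      have v_eq: "gen k \<circ> sv = v" unfolding sv_def by (simp add: comp_assoc[symmetric])
      then have "v = svt \<and> (k = 0 \<longleftrightarrow> j = 0)"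
        using gen_comp_eq_comp_gen[OF sv k j] that unfolding svt(1) vt_def by auto
      moreover have "vt = sv" if "v = svt"
        using that unfolding vt_def svt(1) by (simp add: comp_assoc)
      ultimately show ?thesis unfolding qpar_def by auto
    qed
    show ?thesis
      unfolding Tmul_eval[OF v] Tmul_right_eval[OF v j] Tmul_eval[OF vt] Tmul_right_eval[OF sv j]
        sv_def[symmetric] vt_def[symmetric] svt(1)[symmetric] svt(2)[symmetric]
      by (rule commute_coeff_identity[OF len_gen_comp_cases[OF v k, folded sv_def]
            len_comp_gen_cases[OF v j, folded vt_def]
            len_comp_gen_cases[OF sv j, folded svt(1)] len_gen_comp_cases[OF vt k, folded svt(2)]
            exchange exchange'])
  qed
qed

section \<open>Reversing the walk\<close>

definition supported :: "nat \<Rightarrow> ((int \<Rightarrow> int) \<Rightarrow> real) \<Rightarrow> bool" where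
  "supported n h \<longleftrightarrow> (\<forall>w. w \<notin> Bn n \<longrightarrow> h w = 0)"

lemma iota_iota: "supported n h \<Longrightarrow> iota n (iota n h) = h"
  unfolding supported_def iota_def by (auto simp: fun_eq_iff inv_in_Bn inv_inv_Bn)

lemma supported_Tmul: "supported n (Tmul n q r k h)"
  unfolding supported_def Tmul_def by simp

lemma iota_Tmul: "supported n h \<Longrightarrow> iota n (Tmul n q r k h) = Tmul_right n q r k (iota n h)"
  unfolding Tmul_right_def by (simp add: iota_iota)

lemma Wword_snoc: "Wword n q r (ks @ [k]) = Tmul n q r k (Wword n q r ks)"
  unfolding Wword_def by simp

lemma supported_Wword: "supported n (Wword n q r ks)"
proof (cases ks rule: rev_cases)
  case Nil
  then show ?thesis unfolding supported_def Wword_def basisT_def using id_in_Bn by auto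
qed (simp add: Wword_snoc supported_Tmul)

lemma iota_basisT_id: "iota n (basisT id) = basisT id"
proof -
  have "inv w = id \<longleftrightarrow> w = id" if "w \<in> Bn n" for w
    using inv_inv_Bn[OF that] by (metis inv_id)
  then show ?thesis
    unfolding iota_def basisT_def by (intro ext) (auto simp: id_in_Bn)
qed

lemma Tmul_right_basisT_id:
  assumes j: "j < n"
  shows "Tmul_right n q r j (basisT id) = Tmul n q r j (basisT id)"
proof
  fix v
  show "Tmul_right n q r j (basisT id) v = Tmul n q r j (basisT id) v"
  proof (cases "v \<in> Bn n")
    case False
    then show ?thesis by (simp add: Tmul_def Tmul_right_def iota_def)
  next
    case v: True
    have "v \<circ> gen j = id \<longleftrightarrow> v = gen j" "gen j \<circ> v = id \<longleftrightarrow> v = gen j"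
      by (metis comp_id gen_comp_gen o_assoc, metis comp_id gen_comp_gen o_assoc id_comp)
    then show ?thesis
      unfolding Tmul_right_eval[OF v j] Tmul_eval[OF v] basisT_def by auto
  qed
qed

lemma Tmul_right_foldl_Tmul:
  assumes "set ks \<subseteq> {0..<n}" "j < n"
  shows "Tmul_right n q r j (foldl (\<lambda>h k. Tmul n q r k h) h ks)
    = foldl (\<lambda>h k. Tmul n q r k h) (Tmul_right n q r j h) ks"
  using assms by (induction ks arbitrary: h) (simp_all add: Tmul_Tmul_right_commute)

lemma iota_Wword:
  assumes "set ks \<subseteq> {0..<n}"
  shows "iota n (Wword n q r ks) = Wword n q r (rev ks)"
  using assms
proof (induction ks rule: rev_induct)
  case Nil
  show ?case by (simp add: Wword_def iota_basisT_id)
next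
  case (snoc k ks)
  then have k: "k < n" and ks: "set ks \<subseteq> {0..<n}" by auto
  have "iota n (Wword n q r (ks @ [k])) = Tmul_right n q r k (Wword n q r (rev ks))"
    using snoc.IH ks by (simp add: Wword_snoc iota_Tmul supported_Wword)
  also have "\<dots> = foldl (\<lambda>h k. Tmul n q r k h) (Tmul n q r k (basisT id)) (rev ks)"
    using Tmul_right_foldl_Tmul[OF _ k, of "rev ks"] Tmul_right_basisT_id[OF k] ks
    unfolding Wword_def by simp
  also have "\<dots> = Wword n q r (rev (ks @ [k]))"
    unfolding Wword_def by simp
  finally show ?case .
qed

lemma replicate_pmf_Suc_snoc:
  "replicate_pmf (Suc m) p = do {xs \<leftarrow> replicate_pmf m p; x \<leftarrow> p; return_pmf (xs @ [x])}"
proof -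
  have "replicate_pmf (Suc m) p = replicate_pmf (m + 1) p"
    by (simp only: Suc_eq_plus1)
  also have "\<dots> = do {xs \<leftarrow> replicate_pmf m p; ys \<leftarrow> replicate_pmf 1 p; return_pmf (xs @ ys)}"
    by (rule replicate_pmf_distrib)
  finally show ?thesis
    by (simp add: bind_assoc_pmf bind_return_pmf)
qed

lemma map_pmf_rev_replicate_pmf: "map_pmf rev (replicate_pmf m p) = replicate_pmf m p"
proof (induction m)
  case (Suc m)
  have "map_pmf rev (replicate_pmf (Suc m) p)
      = do {x \<leftarrow> p; xs \<leftarrow> map_pmf rev (replicate_pmf m p); return_pmf (xs @ [x])}"
    by (simp add: map_bind_pmf bind_map_pmf)
  also have "\<dots> = do {xs \<leftarrow> replicate_pmf m p; x \<leftarrow> p; return_pmf (xs @ [x])}"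
    unfolding Suc.IH by (rule bind_commute_pmf)
  also have "\<dots> = replicate_pmf (Suc m) p"
    by (rule replicate_pmf_Suc_snoc[symmetric])
  finally show ?case .
qed simp

lemma set_pmf_label_pmf:
  assumes n: "1 \<le> n" and \<alpha>: "0 < \<alpha>"
  shows "set_pmf (label_pmf n \<alpha>) \<subseteq> {0..<n}"
proof
  fix k
  assume k: "k \<in> set_pmf (label_pmf n \<alpha>)"
  define p where "p = \<alpha> / (\<alpha> + real n - 1)"
  have p: "0 \<le> p" "p \<le> 1" unfolding p_def using n \<alpha> by auto
  from k obtain b where b: "b \<in> set_pmf (bernoulli_pmf p)"
    "k \<in> set_pmf (if b then return_pmf 0 else map_pmf Suc (pmf_of_set {0..<n - 1}))"
    unfolding label_pmf_def p_def by auto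
  show "k \<in> {0..<n}"
  proof (cases b)
    case False
    then have "p \<noteq> 1" using b(1) by (auto simp: set_pmf_iff)
    then have "{0..<n - 1} \<noteq> {}" unfolding p_def using n \<alpha> by auto
    then show ?thesis using b(2) False by auto
  qed (use b n in auto)
qed

theorem lemma3p4:
  fixes n :: nat and q \<alpha> \<gamma> r t :: real
  assumes "n \<ge> 1"
    and "0 < q" and "q < 1"
    and "0 < \<gamma>" and "\<gamma> < \<alpha>"
    and "r = \<gamma> / \<alpha>"
    and "t \<ge> 0"
  shows "map_pmf (iota n) (W_law n q r \<alpha> t) = W_law n q r \<alpha> t"
proof -
  have labels: "set ks \<subseteq> {0..<n}" if "ks \<in> set_pmf (rings_pmf n \<alpha> t)" for ks
    using that set_pmf_label_pmf[of n \<alpha>] assms(1,4,5) unfolding rings_pmf_def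
    by (auto simp: set_replicate_pmf)
  have "map_pmf (iota n) (W_law n q r \<alpha> t) = map_pmf (\<lambda>ks. Wword n q r (rev ks)) (rings_pmf n \<alpha> t)"
    unfolding W_law_def map_pmf_comp using labels by (auto intro: map_pmf_cong simp: iota_Wword)
  also have "\<dots> = map_pmf (Wword n q r) (map_pmf rev (rings_pmf n \<alpha> t))"
    by (simp add: map_pmf_comp)
  also have "map_pmf rev (rings_pmf n \<alpha> t) = rings_pmf n \<alpha> t"
    unfolding rings_pmf_def by (simp add: map_bind_pmf map_pmf_rev_replicate_pmf)
  finally show ?thesis
    unfolding W_law_def .
qed

end
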